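(* There does not exist an equal norm tight integer frame with five elements in $\mathcal{H}_3$.
   Context: $\mathcal{H}_M$ is the real $M$-dimensional Hilbert space, identified with $\mathbb{R}^M$ via a fixed orthonormal basis. An equal norm tight integer frame (ENTIF) with $N$ elements in $\mathcal{H}_M$ is an $M\times N$ integer matrix $A$ of rank $M$ with $AA^T=\lambda I_M$ for some $\lambda>0$ and all columns of the same Euclidean norm. *)

theory Defs
  imports "HOL-Analysis.Analysis"
begin

definition real_mat :: "int ^ 'n ^ 'm \<Rightarrow> real ^ 'n ^ 'm" where
  "real_mat A = (\<chi> i j. of_int (A $ i $ j))"

text \<open>Equal norm tight integer frame: integer matrix A of rank M with A A^T = lambda I
  for some lambda > 0, and all columns of the same Euclidean norm.\<close>
definition ENTIF :: "int ^ 'n ^ 'm \<Rightarrow> bool" where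
  "ENTIF A \<longleftrightarrow>
     rank (real_mat A) = CARD('m) \<and>
     (\<exists>lam::real. lam > 0 \<and> real_mat A ** transpose (real_mat A) = lam *\<^sub>R mat 1) \<and>
     (\<forall>j k. norm (column j (real_mat A)) = norm (column k (real_mat A)))"

end

theory Submission imports Defs begin

text \<open>Write the frame as an integer matrix whose rows are orthogonal of squared norm L and
whose columns have squared norm C; then 3 L = 5 C. A square is 0 or 1 mod 4 according to
parity, so each column has exactly C mod 4 odd entries and each row a number of odd entries
congruent to L mod 4.
Counting the odd entries by rows and by columns rules out C mod 4 = 1 and 2; for C mod 4 = 3
all entries are odd and two rows have odd inner product. Hence all entries are even, and
halving them gives a frame with L/4 in place of L: infinite descent.\<close>

lemma power2_mod_4_int: "(x::int)^2 mod 4 = (if odd x then 1 else 0)"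
proof (cases "odd x")
  case True
  then obtain k where "x = 2 * k + 1" by (rule oddE)
  then have "x^2 = 1 + 4 * (k^2 + k)" by (simp add: power2_eq_square algebra_simps)
  then show ?thesis using True by presburger
next
  case False
  then obtain k where "x = 2 * k" by blast
  then show ?thesis using False by (simp add: power_mult_distrib)
qed

lemma sum_power2_mod_4_int:
  fixes f :: "'a \<Rightarrow> int"
  assumes "finite S"
  shows "(\<Sum>x\<in>S. (f x)^2) mod 4 = int (card {x\<in>S. odd (f x)}) mod 4"
proof -
  have "(\<Sum>x\<in>S. (f x)^2) mod 4 = (\<Sum>x\<in>S. (f x)^2 mod 4) mod 4"
    by (simp add: mod_sum_eq)
  also have "(\<Sum>x\<in>S. (f x)^2 mod 4) = int (card {x\<in>S. odd (f x)})"
    using assms by (simp add: power2_mod_4_int sum.If_cases Int_def conj_commute)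
  finally show ?thesis .
qed

lemma sum_card_Collect_swap:
  "(\<Sum>i\<in>UNIV. card {j. P i j}) = (\<Sum>j\<in>UNIV. card {i::'i::finite. P i (j::'j::finite)})"
  using sum.swap_restrict[of UNIV UNIV "\<lambda>_ _. 1::nat" P] by simp

definition equal_norm_tight_int :: "('i::finite \<Rightarrow> 'j::finite \<Rightarrow> int) \<Rightarrow> int \<Rightarrow> int \<Rightarrow> bool" where
  "equal_norm_tight_int a L C \<longleftrightarrow>
     (\<forall>i k. i \<noteq> k \<longrightarrow> (\<Sum>j\<in>UNIV. a i j * a k j) = 0) \<and>
     (\<forall>i. (\<Sum>j\<in>UNIV. (a i j)^2) = L) \<and>
     (\<forall>j. (\<Sum>i\<in>UNIV. (a i j)^2) = C)"

lemma ENTIF_imp_equal_norm_tight_int: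
  fixes A :: "int ^ 'n ^ 'm"
  assumes "ENTIF A"
  obtains L C where "L > 0" "equal_norm_tight_int (\<lambda>i j. A $ i $ j) L C"
proof -
  obtain lam :: real where "lam > 0" and gram: "real_mat A ** transpose (real_mat A) = lam *\<^sub>R mat 1"
    using assms unfolding ENTIF_def by blast
  have row_inner: "real_of_int (\<Sum>j\<in>UNIV. A$i$j * A$k$j) = (if i = k then lam else 0)" for i k
  proof -
    have "(real_mat A ** transpose (real_mat A)) $ i $ k = (lam *\<^sub>R mat 1) $ i $ k"
      using gram by simp
    then show ?thesis by (simp add: matrix_matrix_mult_def transpose_def real_mat_def mat_def)
  qed
  have column_norm: "(norm (column j (real_mat A)))^2 = real_of_int (\<Sum>i\<in>UNIV. (A$i$j)^2)" for j
    unfolding power2_norm_eq_inner by (simp add: inner_vec_def column_def real_mat_def power2_eq_square)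
  have equal_columns: "norm (column j (real_mat A)) = norm (column k (real_mat A))" for j k
    using assms unfolding ENTIF_def by blast
  fix i0 :: 'm and j0 :: 'n
  let ?L = "\<Sum>j\<in>UNIV. (A$i0$j)^2" and ?C = "\<Sum>i\<in>UNIV. (A$i$j0)^2"
  have row_norm: "real_of_int (\<Sum>j\<in>UNIV. (A$i$j)^2) = lam" for i
    using row_inner[of i i] by (simp add: power2_eq_square)
  have rows: "(\<Sum>j\<in>UNIV. (A$i$j)^2) = ?L" for i
    using row_norm[of i] row_norm[of i0] by linarith
  have cols: "(\<Sum>i\<in>UNIV. (A$i$j)^2) = ?C" for j
  proof -
    have "real_of_int (\<Sum>i\<in>UNIV. (A$i$j)^2) = real_of_int ?C"
      unfolding column_norm[symmetric] equal_columns[of j j0] ..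
    then show ?thesis by linarith
  qed
  have orthogonal: "(\<Sum>j\<in>UNIV. A$i$j * A$k$j) = 0" if "i \<noteq> k" for i k
    using row_inner[of i k] that by (metis of_int_eq_0_iff)
  have "?L > 0" using row_norm[of i0] \<open>lam > 0\<close> by linarith
  moreover have "equal_norm_tight_int (\<lambda>i j. A $ i $ j) ?L ?C"
    unfolding equal_norm_tight_int_def using orthogonal rows cols by blast
  ultimately show thesis by (rule that)
qed

lemma equal_norm_tight_int_card:
  assumes "equal_norm_tight_int (a :: 'i::finite \<Rightarrow> 'j::finite \<Rightarrow> int) L C"
  shows "int CARD('i) * L = int CARD('j) * C"
proof -
  have "(\<Sum>i\<in>UNIV. \<Sum>j\<in>UNIV. (a i j)^2) = (\<Sum>j\<in>UNIV. \<Sum>i\<in>UNIV. (a i j)^2)"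
    by (rule sum.swap)
  then show ?thesis using assms by (simp add: equal_norm_tight_int_def)
qed

lemma equal_norm_tight_int_halve:
  assumes "equal_norm_tight_int (\<lambda>i j. 2 * b i j) L C"
  shows "equal_norm_tight_int b (L div 4) (C div 4)" and "L = 4 * (L div 4)"
proof -
  have squares: "(2 * x)^2 = 4 * x^2" "(2 * x) * (2 * y) = 4 * (x * y)" for x y :: int
    by (simp_all add: power_mult_distrib)
  have "(\<forall>i k. i \<noteq> k \<longrightarrow> 4 * (\<Sum>j\<in>UNIV. b i j * b k j) = 0) \<and>
        (\<forall>i. 4 * (\<Sum>j\<in>UNIV. (b i j)^2) = L) \<and> (\<forall>j. 4 * (\<Sum>i\<in>UNIV. (b i j)^2) = C)"
    using assms by (simp add: equal_norm_tight_int_def squares sum_distrib_left[symmetric])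
  then show "equal_norm_tight_int b (L div 4) (C div 4)" and "L = 4 * (L div 4)"
    unfolding equal_norm_tight_int_def by auto
qed

lemma equal_norm_tight_int_3_5_even:
  fixes a :: "'i::finite \<Rightarrow> 'j::finite \<Rightarrow> int"
  assumes "CARD('i) = 3" "CARD('j) = 5" and frame: "equal_norm_tight_int a L C"
  shows "even (a i j)"
proof -
  define w where "w i = int (card {j. odd (a i j)})" for i
  define c where "c j = int (card {i. odd (a i j)})" for j
  have w_le: "w i \<le> 5" for i
    using card_mono[of UNIV "{j. odd (a i j)}"] \<open>CARD('j) = 5\<close> unfolding w_def by simp
  have w_mod: "w i mod 4 = L mod 4" for i
    using frame sum_power2_mod_4_int[of UNIV "a i"] unfolding w_def equal_norm_tight_int_def by simp
  have c_le: "c j \<le> 3" for j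
    using card_mono[of UNIV "{i. odd (a i j)}"] \<open>CARD('i) = 3\<close> unfolding c_def by simp
  have c_mod: "c j mod 4 = C mod 4" for j
    using frame sum_power2_mod_4_int[of UNIV "\<lambda>i. a i j"] unfolding c_def equal_norm_tight_int_def
    by simp
  have c_eq: "c j = C mod 4" for j
    using c_le[of j] c_mod[of j] unfolding c_def by simp
  have w_eq: "w i = L mod 4" if "2 \<le> L mod 4" for i
    using w_le[of i] w_mod[of i] that unfolding w_def by presburger
  have "(\<Sum>i\<in>UNIV. w i) = (\<Sum>j\<in>UNIV. c j)"
    using sum_card_Collect_swap[of "\<lambda>i j. odd (a i j)"] unfolding w_def c_def of_nat_sum[symmetric]
    by simp
  then have count: "(\<Sum>i\<in>(UNIV::'i set). w i) = 5 * (C mod 4)"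
    using c_eq \<open>CARD('j) = 5\<close> by simp
  have "3 * L = 5 * C"
    using equal_norm_tight_int_card[OF frame] assms(1,2) by simp
  then have "C mod 4 = 0 \<or> (2 \<le> L mod 4 \<and> 0 < C mod 4 \<and> C mod 4 < 3) \<or> C mod 4 = 3"
    by presburger
  then consider "C mod 4 = 0" | "2 \<le> L mod 4" "0 < C mod 4" "C mod 4 < 3" | "C mod 4 = 3"
    by blast
  then show ?thesis
  proof cases
    case 1
    then show ?thesis using c_eq[of j] unfolding c_def by auto
  next
    case 2
    then have "3 * (L mod 4) = 5 * (C mod 4)"
      using count w_eq \<open>CARD('i) = 3\<close> by simp
    with 2 \<open>3 * L = 5 * C\<close> have False by presburger
    then show ?thesis ..
  next
    case 3
    have "{i. odd (a i j)} = UNIV" for j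
      using c_eq[of j] 3 \<open>CARD('i) = 3\<close> unfolding c_def by (simp add: card_subset_eq)
    then have all_odd: "odd (a i j)" for i j by blast
    have "\<not> CARD('i) \<le> Suc 0" using \<open>CARD('i) = 3\<close> by simp
    then obtain i k :: 'i where "i \<noteq> k" by (auto simp add: card_le_Suc0_iff_eq)
    moreover have "odd (\<Sum>j\<in>UNIV. a i j * a k j)"
      using all_odd \<open>CARD('j) = 5\<close> by (simp add: even_sum_iff)
    ultimately show ?thesis using frame unfolding equal_norm_tight_int_def by auto
  qed
qed

lemma equal_norm_tight_int_3_5_nonpos:
  fixes a :: "'i::finite \<Rightarrow> 'j::finite \<Rightarrow> int"
  assumes "CARD('i) = 3" "CARD('j) = 5" and "equal_norm_tight_int a L C"
  shows "L \<le> 0"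
  using assms(3)
proof (induction "nat L" arbitrary: a L C rule: less_induct)
  case less
  define b where "b i j = a i j div 2" for i j
  have "a = (\<lambda>i j. 2 * b i j)"
    using equal_norm_tight_int_3_5_even[OF assms(1,2) less.prems] unfolding b_def by (intro ext) simp
  then have halved: "equal_norm_tight_int b (L div 4) (C div 4)" and "L = 4 * (L div 4)"
    using equal_norm_tight_int_halve[of b L C] less.prems by simp_all
  show "L \<le> 0"
  proof (rule ccontr)
    assume "\<not> L \<le> 0"
    then have "nat (L div 4) < nat L" using \<open>L = 4 * (L div 4)\<close> by linarith
    then have "L div 4 \<le> 0" using less.hyps halved by blast
    then show False using \<open>\<not> L \<le> 0\<close> \<open>L = 4 * (L div 4)\<close> by linarith
  qed
qed

theorem corollary4p13:
  shows "\<not> (\<exists>A :: int ^ 5 ^ 3. ENTIF A)"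
proof
  assume "\<exists>A :: int ^ 5 ^ 3. ENTIF A"
  then obtain A :: "int ^ 5 ^ 3" where "ENTIF A" ..
  then obtain L C where "L > 0" "equal_norm_tight_int (\<lambda>i j. A $ i $ j) L C"
    by (rule ENTIF_imp_equal_norm_tight_int)
  then show False using equal_norm_tight_int_3_5_nonpos[of "\<lambda>i j. A $ i $ j" L C] by simp
qed

end
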